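(* Suppose $\Theta=\mathbb{R}^N$ with the Euclidean inner product and $J(\theta)=\|\theta\|_1=\sum_{i=1}^N|\theta_i|$. Under the hypotheses of the convergence-in-norm theorem (i.e., $\delta>0$; (A), (B), (C); step sizes with $\tau^{(k)}\le\frac{\mu}{2\delta L^2}$, $\tau^{(k+1)}\le\tau^{(k)}$, $\sum_k(\tau^{(k)})^2<\infty$, $\sum_k\tau^{(k)}=\infty$), with $\theta^*$ the unique minimizer of $\mathcal{L}$ and $d_k:=\mathbb{E}\big[D^{v^{(k)}}_{J_\delta}(\theta^*,\theta^{(k)})\big]$, it holds $\lim_{k\to\infty}d_k=0$, and in particular $\lim_{k\to\infty}\mathbb{E}\big[\|\theta^*-\theta^{(k)}\|^2\big]=0$.
   Context: For a convex proper functional $J$, $\partial J(\theta)$ denotes its subdifferential and, for $p\in\partial J(\theta)$, $D^p_J(\bar\theta,\theta)=J(\bar\theta)-J(\theta)-\langle p,\bar\theta-\theta\rangle$ its Bregman distance. The proximal operator is $\mathrm{prox}_F(\bar\theta)=\arg\min_\theta\frac12\|\theta-\bar\theta\|^2+F(\theta)$. For $\delta>0$, $J_\delta(\theta)=J(\theta)+\frac1{2\delta}\|\theta\|^2$. Let $(\Omega,F,\mathbb{P})$ be a probability space, $\mathcal{L}:\Theta\to\mathbb{R}$ differentiable, and $g:\Theta\times\Omega\to\Theta$ (measurable in $\omega$) with $\mathbb{E}_\omega[g(\theta;\omega)]=\nabla\mathcal{L}(\theta)$ for all $\theta$. Stochastic linearized Bregman iteration: deterministic $\theta^{(0)}$,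 $v^{(0)}\in\partial J_\delta(\theta^{(0)})$; $\omega^{(0)},\omega^{(1)},\dots$ independent with law $\mathbb{P}$; $g^{(k)}=g(\theta^{(k)};\omega^{(k)})$, $v^{(k+1)}=v^{(k)}-\tau^{(k)}g^{(k)}$, $\theta^{(k+1)}=\mathrm{prox}_{\delta J}(\delta v^{(k+1)})$; then $v^{(k)}\in\partial J_\delta(\theta^{(k)})$. All expectations appearing are assumed finite. (A): $\mathcal{L}\ge0$, continuously differentiable, $\nabla\mathcal{L}$ is $L$-Lipschitz, $L\in(0,\infty)$. (B): $\exists\sigma>0$: $\mathbb{E}_\omega\|g(\theta;\omega)-\nabla\mathcal{L}(\theta)\|^2\le\sigma^2$ for all $\theta$. (C): $\mathcal{L}(\tilde\theta)\ge\mathcal{L}(\theta)+\langle\nabla\mathcal{L}(\theta),\tilde\theta-\theta\rangle+\frac\mu2\|\tilde\theta-\theta\|^2$ for all $\theta,\tilde\theta$, with $\mu\in(0,\infty)$. *)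

theory Defs
  imports "HOL-Probability.Probability"
begin

definition subdiff :: "('a::real_inner \<Rightarrow> real) \<Rightarrow> 'a \<Rightarrow> 'a set" where
  "subdiff J \<theta> = {p. \<forall>y. J y \<ge> J \<theta> + p \<bullet> (y - \<theta>)}"

definition bregman :: "('a::real_inner \<Rightarrow> real) \<Rightarrow> 'a \<Rightarrow> 'a \<Rightarrow> 'a \<Rightarrow> real" where
  "bregman J p a b = J a - J b - p \<bullet> (a - b)"

definition prox :: "('a::real_inner \<Rightarrow> real) \<Rightarrow> 'a \<Rightarrow> 'a" where
  "prox F z = (THE \<theta>. \<forall>\<theta>'. (1/2) * (norm (\<theta> - z))\<^sup>2 + F \<theta> \<le> (1/2) * (norm (\<theta>' - z))\<^sup>2 + F \<theta>')"

definition Jdelta :: "('a::real_inner \<Rightarrow> real) \<Rightarrow> real \<Rightarrow> 'a \<Rightarrow> real" where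
  "Jdelta J \<delta> \<theta> = J \<theta> + (norm \<theta>)\<^sup>2 / (2 * \<delta>)"

definition l1norm :: "real ^ 'n \<Rightarrow> real" where
  "l1norm x = (\<Sum>i\<in>UNIV. \<bar>x $ i\<bar>)"

text \<open>Stochastic linearized Bregman iteration along a realisation ws of the samples
  omega^(0), omega^(1), ...; returns (theta^(k), v^(k)).\<close>
fun slbi :: "('a::real_inner \<Rightarrow> real) \<Rightarrow> real \<Rightarrow> ('a \<Rightarrow> 'w \<Rightarrow> 'a) \<Rightarrow> (nat \<Rightarrow> real)
              \<Rightarrow> 'a \<Rightarrow> 'a \<Rightarrow> (nat \<Rightarrow> 'w) \<Rightarrow> nat \<Rightarrow> 'a \<times> 'a" where
  "slbi J \<delta> g \<tau> \<theta>0 v0 ws 0 = (\<theta>0, v0)"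
| "slbi J \<delta> g \<tau> \<theta>0 v0 ws (Suc k) =
     (let \<theta> = fst (slbi J \<delta> g \<tau> \<theta>0 v0 ws k);
          v = snd (slbi J \<delta> g \<tau> \<theta>0 v0 ws k);
          v' = v - \<tau> k *\<^sub>R g \<theta> (ws k)
      in (prox (\<lambda>x. \<delta> * J x) (\<delta> *\<^sub>R v'), v'))"

end

theory Submission
  imports Defs
begin

(* The coordinatewise sign conditions satisfied by subgradients of the l1 norm make the Bregman
   distance of J_delta = |.|_1 + |.|^2/(2 delta) to theta* comparable to |theta* - theta|^2 from
   both sides: at least 1/(2 delta) times it, at most a constant depending only on theta* times it.
   One step of the iteration raises this distance by at most
   tau <g, theta* - theta> + delta tau^2 |g|^2 / 2.  The fresh sample is independent of the current
   iterate, so in expectation strong convexity gives E <g, theta* - theta> <= -mu e_k and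
   E |g|^2 <= Lc^2 e_k + sigma^2, where e_k = E |theta* - theta_k|^2.  With the step size bound this
   yields d_(k+1) <= d_k - mu tau_k e_k / 2 + delta sigma^2 tau_k^2 / 2.  Square summability of
   tau makes d_k converge with sum tau_k e_k finite; since sum tau_k diverges and e_k is comparable
   to d_k, the limit is 0. *)

lemma power2_norm_add:
  fixes a b :: "'a::real_inner"
  shows "(norm (a + b))\<^sup>2 = (norm a)\<^sup>2 + 2 * (a \<bullet> b) + (norm b)\<^sup>2"
  by (simp add: power2_norm_eq_inner inner_add_left inner_add_right inner_commute)

lemma inner_le_Young:
  fixes u w :: "'a::real_inner"
  assumes "d > 0"
  shows "u \<bullet> w \<le> d / 2 * (norm u)\<^sup>2 + (norm w)\<^sup>2 / (2 * d)"
proof -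
  have "0 \<le> (norm (d *\<^sub>R u - w))\<^sup>2" by simp
  also have "\<dots> = d\<^sup>2 * (norm u)\<^sup>2 - 2 * d * (u \<bullet> w) + (norm w)\<^sup>2"
    using power2_norm_add[of "d *\<^sub>R u" "- w"] by (simp add: power_mult_distrib)
  finally show ?thesis using assms by (simp add: field_simps power2_eq_square)
qed

section \<open>Subgradients of the l1 norm and soft thresholding\<close>

(* The hypothesis says that q + a / d is a subgradient of |.| + (.)^2 / (2 d) at a. *)
lemma abs_subgrad_bound:
  fixes a q d :: real
  assumes d: "d > 0" and subgrad: "\<And>t. \<bar>a + t\<bar> - \<bar>a\<bar> + t\<^sup>2 / (2 * d) \<ge> q * t"
  shows "\<bar>q\<bar> \<le> 1"
proof (rule ccontr)
  assume "\<not> \<bar>q\<bar> \<le> 1"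
  define r where "r = \<bar>q\<bar> - 1"
  have r: "r > 0" using \<open>\<not> \<bar>q\<bar> \<le> 1\<close> by (simp add: r_def)
  define t where "t = d * (q - sgn q)"
  have "\<bar>t\<bar> + \<bar>t\<bar>\<^sup>2 / (2 * d) \<ge> q * t"
    using subgrad[of t] abs_triangle_ineq[of a t] by simp
  moreover have "\<bar>t\<bar> = d * r" "q * t = d * (r + 1) * r"
    using r d by (auto simp: t_def r_def sgn_if abs_if algebra_simps)
  ultimately have "d * r * (1 + r / 2) \<ge> d * r * (r + 1)"
    using d by (simp add: power2_eq_square field_simps)
  then have "1 + r / 2 \<ge> r + 1"
    using r d by (simp add: mult_le_cancel_left)
  then show False using r by linarith
qed

lemma abs_subgrad_eq:
  fixes a q d :: real
  assumes d: "d > 0" and subgrad: "\<And>t. \<bar>a + t\<bar> - \<bar>a\<bar> + t\<^sup>2 / (2 * d) \<ge> q * t"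
  shows "q * a = \<bar>a\<bar>"
proof -
  have small: "\<bar>a\<bar> - q * a \<le> s * a\<^sup>2 / (2 * d)" if s: "0 < s" "s < 1" for s
  proof -
    have "a + - s * a = (1 - s) * a" by (simp add: algebra_simps)
    then have "\<bar>a + - s * a\<bar> = (1 - s) * \<bar>a\<bar>"
      using s by (simp add: abs_mult)
    then have "s * (s * a\<^sup>2 / (2 * d)) \<ge> s * (\<bar>a\<bar> - q * a)"
      using subgrad[of "- s * a"] by (simp add: power2_eq_square algebra_simps)
    then show ?thesis by (rule mult_left_le_imp_le) (use s in simp)
  qed
  have "((\<lambda>s. s * a\<^sup>2 / (2 * d)) \<longlongrightarrow> 0 * a\<^sup>2 / (2 * d)) (at_right 0)"
    using d by (intro tendsto_intros) simp
  moreover have "eventually (\<lambda>s. \<bar>a\<bar> - q * a \<le> s * a\<^sup>2 / (2 * d)) (at_right 0)"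
    unfolding eventually_at_right[of 0 1, OF zero_less_one] using small by (auto intro!: exI[of _ 1])
  ultimately have "\<bar>a\<bar> - q * a \<le> 0"
    by (intro tendsto_le[OF trivial_limit_at_right_real _ tendsto_const]) simp_all
  moreover have "\<bar>q * a\<bar> \<le> \<bar>a\<bar>"
    using abs_subgrad_bound[OF assms] by (simp add: abs_mult mult_left_le_one_le)
  ultimately show ?thesis by linarith
qed

definition clip :: "real \<Rightarrow> real ^ 'n \<Rightarrow> real ^ 'n" where
  "clip d z = (\<chi> i. max (-d) (min d (z $ i)))"

definition soft_threshold :: "real \<Rightarrow> real ^ 'n \<Rightarrow> real ^ 'n" where
  "soft_threshold d z = z - clip d z"

definition l1_subgrad :: "real ^ 'n \<Rightarrow> real ^ 'n \<Rightarrow> bool" where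
  "l1_subgrad p x \<longleftrightarrow> (\<forall>i. \<bar>p $ i\<bar> \<le> 1 \<and> p $ i * x $ i = \<bar>x $ i\<bar>)"

lemma l1_subgrad_inner: "l1_subgrad p x \<Longrightarrow> p \<bullet> x = l1norm x"
  by (simp add: l1_subgrad_def inner_vec_def l1norm_def)

lemma l1_subgrad_ineq:
  assumes "l1_subgrad p x"
  shows "l1norm x + p \<bullet> (y - x) \<le> l1norm y"
proof -
  have "p \<bullet> y \<le> l1norm y"
    unfolding inner_vec_def l1norm_def
  proof (rule sum_mono)
    fix i
    have "\<bar>p $ i\<bar> \<le> 1" using assms by (simp add: l1_subgrad_def)
    then have "\<bar>p $ i * y $ i\<bar> \<le> \<bar>y $ i\<bar>" by (simp add: abs_mult mult_left_le_one_le)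
    then show "p $ i \<bullet> y $ i \<le> \<bar>y $ i\<bar>" by simp
  qed
  then show ?thesis using l1_subgrad_inner[OF assms] by (simp add: inner_diff_right)
qed

lemma l1_subgrad_clip:
  assumes "d > 0"
  shows "l1_subgrad (inverse d *\<^sub>R clip d z) (soft_threshold d z)"
  unfolding l1_subgrad_def
proof
  fix i
  let ?c = "max (-d) (min d (z $ i))"
  have c: "clip d z $ i = ?c" by (simp add: clip_def)
  have s: "soft_threshold d z $ i = z $ i - ?c" by (simp add: soft_threshold_def c)
  have "\<bar>?c / d\<bar> \<le> 1 \<and> ?c / d * (z $ i - ?c) = \<bar>z $ i - ?c\<bar>"
  proof (cases "z $ i \<ge> d")
    case False
    then show ?thesis using assms by (cases "z $ i \<le> -d") (simp_all add: abs_le_iff)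
  qed (use assms in simp)
  then show "\<bar>(inverse d *\<^sub>R clip d z) $ i\<bar> \<le> 1 \<and>
      (inverse d *\<^sub>R clip d z) $ i * soft_threshold d z $ i = \<bar>soft_threshold d z $ i\<bar>"
    by (simp add: c s divide_inverse mult.commute)
qed

lemma soft_threshold_prox_ineq:
  assumes "d > 0"
  shows "(1/2) * (norm (soft_threshold d z - z))\<^sup>2 + d * l1norm (soft_threshold d z)
           + (1/2) * (norm (y - soft_threshold d z))\<^sup>2
         \<le> (1/2) * (norm (y - z))\<^sup>2 + d * l1norm y"
proof -
  let ?s = "soft_threshold d z" and ?c = "clip d z"
  have "l1norm ?s + (inverse d *\<^sub>R ?c) \<bullet> (y - ?s) \<le> l1norm y"
    by (rule l1_subgrad_ineq[OF l1_subgrad_clip[OF assms]])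
  then have "d * l1norm ?s + ?c \<bullet> (y - ?s) \<le> d * l1norm y"
    using assms by (simp add: field_simps)
  moreover have "(norm (y - z))\<^sup>2 = (norm (y - ?s))\<^sup>2 - 2 * (?c \<bullet> (y - ?s)) + (norm (?s - z))\<^sup>2"
  proof -
    have "y - z = (y - ?s) + - ?c" "?s - z = - ?c" by (simp_all add: soft_threshold_def)
    then show ?thesis by (simp only: power2_norm_add) (simp add: inner_commute)
  qed
  ultimately show ?thesis by linarith
qed

lemma prox_l1norm:
  assumes "d > 0"
  shows "prox (\<lambda>x. d * l1norm x) z = soft_threshold d z"
  unfolding prox_def
proof (rule the_equality)
  show "\<forall>y. 1/2 * (norm (soft_threshold d z - z))\<^sup>2 + d * l1norm (soft_threshold d z)
          \<le> 1/2 * (norm (y - z))\<^sup>2 + d * l1norm y"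
  proof
    fix y
    have "0 \<le> 1/2 * (norm (y - soft_threshold d z))\<^sup>2" by simp
    then show "1/2 * (norm (soft_threshold d z - z))\<^sup>2 + d * l1norm (soft_threshold d z)
        \<le> 1/2 * (norm (y - z))\<^sup>2 + d * l1norm y"
      using soft_threshold_prox_ineq[OF assms, of z y] by linarith
  qed
next
  fix x
  assume "\<forall>y. 1/2 * (norm (x - z))\<^sup>2 + d * l1norm x \<le> 1/2 * (norm (y - z))\<^sup>2 + d * l1norm y"
  then have "1/2 * (norm (x - z))\<^sup>2 + d * l1norm x
      \<le> 1/2 * (norm (soft_threshold d z - z))\<^sup>2 + d * l1norm (soft_threshold d z)"
    by blast
  then have "(norm (x - soft_threshold d z))\<^sup>2 \<le> 0"
    using soft_threshold_prox_ineq[OF assms, of z x] by linarith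
  then show "x = soft_threshold d z" by simp
qed

lemma l1_subgrad_soft_threshold:
  assumes "d > 0"
  shows "l1_subgrad (w - inverse d *\<^sub>R soft_threshold d (d *\<^sub>R w)) (soft_threshold d (d *\<^sub>R w))"
proof -
  have "w - inverse d *\<^sub>R soft_threshold d (d *\<^sub>R w) = inverse d *\<^sub>R clip d (d *\<^sub>R w)"
    using assms by (simp add: soft_threshold_def scaleR_diff_right)
  then show ?thesis using l1_subgrad_clip[OF assms, of "d *\<^sub>R w"] by simp
qed

lemma l1norm_add_axis: "l1norm (x + axis i t) = l1norm x + \<bar>x $ i + t\<bar> - \<bar>x $ i\<bar>"
proof -
  have "l1norm (x + axis i t) = (\<Sum>j\<in>UNIV. \<bar>x $ j\<bar> + (if j = i then \<bar>x $ i + t\<bar> - \<bar>x $ i\<bar> else 0))"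
    unfolding l1norm_def by (rule sum.cong) (auto simp: axis_def)
  then show ?thesis by (simp add: sum.distrib l1norm_def)
qed

lemma subdiff_Jdelta_l1_subgrad:
  assumes d: "d > 0" and v: "v \<in> subdiff (Jdelta l1norm d) x"
  shows "l1_subgrad (v - inverse d *\<^sub>R x) x"
  unfolding l1_subgrad_def
proof
  fix i
  let ?q = "v $ i - x $ i / d"
  have "\<bar>x $ i + t\<bar> - \<bar>x $ i\<bar> + t\<^sup>2 / (2 * d) \<ge> ?q * t" for t
  proof -
    have "Jdelta l1norm d x + v \<bullet> axis i t \<le> Jdelta l1norm d (x + axis i t)"
      using v unfolding subdiff_def by (auto dest: spec[of _ "x + axis i t"])
    moreover have "(norm (x + axis i t))\<^sup>2 = (norm x)\<^sup>2 + 2 * (x $ i * t) + t\<^sup>2"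
    proof -
      have "(norm (axis i t))\<^sup>2 = t\<^sup>2"
        unfolding power2_norm_eq_inner inner_axis by (simp add: axis_def power2_eq_square)
      then show ?thesis by (simp add: power2_norm_add inner_axis)
    qed
    ultimately show ?thesis
      using d by (simp add: Jdelta_def l1norm_add_axis inner_axis field_simps)
  qed
  then have "\<bar>?q\<bar> \<le> 1" "?q * x $ i = \<bar>x $ i\<bar>"
    using abs_subgrad_bound[OF d] abs_subgrad_eq[OF d] by blast+
  then show "\<bar>(v - inverse d *\<^sub>R x) $ i\<bar> \<le> 1 \<and> (v - inverse d *\<^sub>R x) $ i * x $ i = \<bar>x $ i\<bar>"
    by (simp add: divide_inverse mult.commute)
qed

section \<open>Bregman distances of the elastic-net functional\<close>

lemma bregman_Jdelta:
  fixes J :: "'a::real_inner \<Rightarrow> real"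
  assumes "d > 0"
  shows "bregman (Jdelta J d) v a x = bregman J (v - inverse d *\<^sub>R x) a x + (norm (a - x))\<^sup>2 / (2 * d)"
proof -
  have "(norm a)\<^sup>2 = (norm x)\<^sup>2 + 2 * (x \<bullet> (a - x)) + (norm (a - x))\<^sup>2"
    using power2_norm_add[of x "a - x"] by simp
  then have "(norm a)\<^sup>2 / (2 * d) = (norm x)\<^sup>2 / (2 * d) + (inverse d *\<^sub>R x) \<bullet> (a - x) + (norm (a - x))\<^sup>2 / (2 * d)"
    using assms by (simp add: field_simps)
  then show ?thesis unfolding bregman_def Jdelta_def by (simp add: inner_diff_left)
qed

lemma bregman_step_le:
  fixes F :: "'a::real_inner \<Rightarrow> real"
  assumes "d > 0" and strong: "(norm (x' - x))\<^sup>2 / (2 * d) \<le> bregman F v x' x"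
  shows "bregman F (v - t *\<^sub>R G) a x' \<le> bregman F v a x + t * (G \<bullet> (a - x)) + d / 2 * t\<^sup>2 * (norm G)\<^sup>2"
proof -
  have "bregman F (v - t *\<^sub>R G) a x' = bregman F v a x - bregman F v x' x + t * (G \<bullet> (a - x')) "
    unfolding bregman_def by (simp add: inner_diff_left inner_diff_right algebra_simps)
  moreover have "t * (G \<bullet> (a - x')) = t * (G \<bullet> (a - x)) + (t *\<^sub>R G) \<bullet> (x - x')"
    by (simp add: inner_diff_right algebra_simps)
  moreover have "(t *\<^sub>R G) \<bullet> (x - x') \<le> d / 2 * t\<^sup>2 * (norm G)\<^sup>2 + (norm (x' - x))\<^sup>2 / (2 * d)"
    using inner_le_Young[OF \<open>d > 0\<close>, of "t *\<^sub>R G" "x - x'"]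
    by (simp add: power_mult_distrib norm_minus_commute)
  ultimately show ?thesis using strong by linarith
qed

(* Either b has the sign of a, so p = sgn a and the left side vanishes, or |a - b| \<ge> |a|. *)
lemma abs_bregman_le:
  fixes a b p :: real
  assumes p1: "\<bar>p\<bar> \<le> 1" and pb: "p * b = \<bar>b\<bar>"
  shows "\<bar>a\<bar> - p * a \<le> (if a = 0 then 0 else 2 / \<bar>a\<bar>) * (a - b)\<^sup>2"
proof (cases "a = 0")
  case a0: False
  show ?thesis
  proof (cases "\<bar>a - b\<bar> \<ge> \<bar>a\<bar>")
    case True
    have "\<bar>p * a\<bar> \<le> \<bar>a\<bar>" using p1 by (simp add: abs_mult mult_left_le_one_le)
    then have "\<bar>a\<bar> - p * a \<le> 2 * \<bar>a\<bar>" by linarith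
    also have "\<dots> = 2 / \<bar>a\<bar> * \<bar>a\<bar>\<^sup>2"
      using a0 by (simp add: field_simps power2_eq_square abs_mult_self_eq)
    also have "\<dots> \<le> 2 / \<bar>a\<bar> * \<bar>a - b\<bar>\<^sup>2"
      using True by (intro mult_left_mono power_mono) auto
    finally show ?thesis using a0 by simp
  next
    case False
    then have "sgn b = sgn a" using a0 by (auto simp: sgn_if abs_if split: if_splits)
    moreover have "b \<noteq> 0" using False by auto
    then have "p = sgn b"
      using pb by (simp add: abs_sgn mult.commute)
    ultimately have "p = sgn a" by simp
    then have "\<bar>a\<bar> - p * a = 0" by (simp add: sgn_mult_abs abs_sgn mult.commute)
    then show ?thesis by simp
  qed
qed simp

definition l1_bregman_const :: "real ^ 'n \<Rightarrow> real" where
  "l1_bregman_const a = (\<Sum>i\<in>UNIV. if a $ i = 0 then 0 else 2 / \<bar>a $ i\<bar>)"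

lemma bregman_l1norm_le:
  assumes "l1_subgrad p x"
  shows "bregman l1norm p a x \<le> l1_bregman_const a * (norm (a - x))\<^sup>2"
proof -
  have "bregman l1norm p a x = (\<Sum>i\<in>UNIV. \<bar>a $ i\<bar> - p $ i * a $ i)"
    using l1_subgrad_inner[OF assms] unfolding bregman_def
    by (simp add: inner_diff_right l1norm_def inner_vec_def sum_subtractf right_diff_distrib)
  also have "\<dots> \<le> (\<Sum>i\<in>UNIV. l1_bregman_const a * (a $ i - x $ i)\<^sup>2)"
  proof (rule sum_mono)
    fix i
    have "\<bar>a $ i\<bar> - p $ i * a $ i \<le> (if a $ i = 0 then 0 else 2 / \<bar>a $ i\<bar>) * (a $ i - x $ i)\<^sup>2"
      using assms by (intro abs_bregman_le) (auto simp: l1_subgrad_def)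
    also have "\<dots> \<le> l1_bregman_const a * (a $ i - x $ i)\<^sup>2"
      unfolding l1_bregman_const_def by (intro mult_right_mono member_le_sum) auto
    finally show "\<bar>a $ i\<bar> - p $ i * a $ i \<le> l1_bregman_const a * (a $ i - x $ i)\<^sup>2" .
  qed
  also have "\<dots> = l1_bregman_const a * (norm (a - x))\<^sup>2"
    by (simp only: power2_norm_eq_inner inner_vec_def) (simp add: power2_eq_square sum_distrib_left)
  finally show ?thesis .
qed

lemma bregman_Jdelta_l1norm_bounds:
  assumes "d > 0" and subgrad: "l1_subgrad (v - inverse d *\<^sub>R x) x"
  shows "(norm (a - x))\<^sup>2 / (2 * d) \<le> bregman (Jdelta l1norm d) v a x"
    and "bregman (Jdelta l1norm d) v a x \<le> (l1_bregman_const a + 1 / (2 * d)) * (norm (a - x))\<^sup>2"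
proof -
  have "0 \<le> bregman l1norm (v - inverse d *\<^sub>R x) a x"
    using l1_subgrad_ineq[OF subgrad, of a] unfolding bregman_def by linarith
  then show "(norm (a - x))\<^sup>2 / (2 * d) \<le> bregman (Jdelta l1norm d) v a x"
    using bregman_Jdelta[OF \<open>d > 0\<close>, of l1norm v a x] by linarith
  show "bregman (Jdelta l1norm d) v a x \<le> (l1_bregman_const a + 1 / (2 * d)) * (norm (a - x))\<^sup>2"
    using bregman_Jdelta[OF \<open>d > 0\<close>, of l1norm v a x] bregman_l1norm_le[OF subgrad, of a]
    by (simp add: algebra_simps)
qed

section \<open>Descent inequalities for real sequences\<close>

lemma not_summable_if_filterlim_at_top:
  fixes \<tau> :: "nat \<Rightarrow> real"
  assumes "filterlim (\<lambda>n. \<Sum>k<n. \<tau> k) at_top sequentially"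
  shows "\<not> summable \<tau>"
  using assms summable_LIMSEQ not_tendsto_and_filterlim_at_infinity[OF sequentially_bot]
    filterlim_at_top_imp_at_infinity by blast

lemma antimono_nonneg_if_filterlim_at_top:
  fixes \<tau> :: "nat \<Rightarrow> real"
  assumes mono: "\<And>k. \<tau> (Suc k) \<le> \<tau> k"
    and div: "filterlim (\<lambda>n. \<Sum>k<n. \<tau> k) at_top sequentially"
  shows "\<tau> k \<ge> 0"
proof (rule ccontr)
  assume "\<not> \<tau> k \<ge> 0"
  have bounded: "(\<Sum>j<k + m. \<tau> j) \<le> (\<Sum>j<k. \<tau> j)" for m
  proof (induction m)
    case (Suc m)
    have "\<tau> (k + m) \<le> \<tau> k" using lift_Suc_antimono_le[of \<tau> k "k + m"] mono by simp
    then show ?case using Suc \<open>\<not> \<tau> k \<ge> 0\<close> by simp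
  qed simp
  obtain N where "\<And>n. n \<ge> N \<Longrightarrow> (\<Sum>j<k. \<tau> j) + 1 \<le> (\<Sum>j<n. \<tau> j)"
    using div by (auto simp: filterlim_at_top eventually_sequentially)
  then have "(\<Sum>j<k. \<tau> j) + 1 \<le> (\<Sum>j<k + N. \<tau> j)" by simp
  then show False using bounded[of N] by linarith
qed

lemma nonneg_descent_convergent:
  fixes d b c :: "nat \<Rightarrow> real"
  assumes d0: "\<And>k. 0 \<le> d k" and b0: "\<And>k. 0 \<le> b k" and c0: "\<And>k. 0 \<le> c k"
    and c: "summable c" and step: "\<And>k. d (Suc k) \<le> d k - b k + c k"
  shows "summable b" and "convergent d"
proof -
  have partial_c: "(\<Sum>j<n. c j) \<le> suminf c" for n
    by (rule sum_le_suminf) (use c c0 in auto)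
  have tele: "(\<Sum>j<n. b j) \<le> d 0 - d n + (\<Sum>j<n. c j)" for n
  proof (induction n)
    case (Suc n)
    then show ?case unfolding sum.lessThan_Suc using step[of n] by linarith
  qed simp
  show b: "summable b"
  proof (rule summableI_nonneg_bounded[OF b0])
    show "(\<Sum>j<n. b j) \<le> d 0 + suminf c" for n
      using tele[of n] partial_c[of n] d0[of n] by linarith
  qed
  define u where "u n = d n + (\<Sum>j<n. b j) - (\<Sum>j<n. c j)" for n
  have "decseq u"
    using step by (intro decseq_SucI) (simp add: u_def algebra_simps)
  moreover have "\<forall>n. - suminf c \<le> u n"
  proof
    fix n
    have "0 \<le> (\<Sum>j<n. b j)" using b0 by (simp add: sum_nonneg)
    then show "- suminf c \<le> u n" using d0[of n] partial_c[of n] by (simp add: u_def)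
  qed
  ultimately obtain l where "u \<longlonglongrightarrow> l" by (rule decseq_convergent)
  then have "(\<lambda>n. u n - (\<Sum>j<n. b j) + (\<Sum>j<n. c j)) \<longlonglongrightarrow> l - suminf b + suminf c"
    by (intro tendsto_intros summable_LIMSEQ b c)
  then show "convergent d" by (auto simp: u_def convergent_def)
qed

lemma descent_tendsto_zero:
  fixes d e \<tau> :: "nat \<Rightarrow> real" and a c C :: real
  assumes d0: "\<And>k. 0 \<le> d k" and e0: "\<And>k. 0 \<le> e k" and \<tau>0: "\<And>k. 0 \<le> \<tau> k"
    and a: "a > 0" and c: "c \<ge> 0"
    and step: "\<And>k. d (Suc k) \<le> d k - a * \<tau> k * e k + c * (\<tau> k)\<^sup>2"
    and dC: "\<And>k. d k \<le> C * e k"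
    and sq: "summable (\<lambda>k. (\<tau> k)\<^sup>2)"
    and div: "filterlim (\<lambda>n. \<Sum>k<n. \<tau> k) at_top sequentially"
  shows "d \<longlonglongrightarrow> 0"
proof -
  have weighted: "summable (\<lambda>k. a * \<tau> k * e k)" and "convergent d"
    using nonneg_descent_convergent[of d "\<lambda>k. a * \<tau> k * e k" "\<lambda>k. c * (\<tau> k)\<^sup>2"]
      d0 e0 \<tau>0 a c sq step by (auto intro: summable_mult)
  then obtain l where l: "d \<longlonglongrightarrow> l" by (auto simp: convergent_def)
  have "l \<le> 0"
  proof (rule ccontr)
    assume "\<not> l \<le> 0"
    then obtain N where N: "\<And>k. k \<ge> N \<Longrightarrow> l / 2 < d k"
      using order_tendstoD(1)[OF l, of "l / 2"] by (auto simp: eventually_sequentially)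
    have "norm (\<tau> k) \<le> 2 * C / (a * l) * (a * \<tau> k * e k)" if "k \<ge> N" for k
    proof -
      have "\<tau> k * (l / 2) \<le> \<tau> k * (C * e k)"
        using N[OF that] dC[of k] \<tau>0[of k] by (intro mult_left_mono) auto
      then show ?thesis using a \<open>\<not> l \<le> 0\<close> \<tau>0[of k] by (simp add: field_simps)
    qed
    then have "summable \<tau>"
      by (rule summable_comparison_test'[OF summable_mult[OF weighted]])
    then show False using not_summable_if_filterlim_at_top[OF div] by contradiction
  qed
  moreover have "l \<ge> 0" by (rule LIMSEQ_le_const[OF l]) (use d0 in auto)
  ultimately show ?thesis using l by simp
qed

section \<open>Expectations over independent samples\<close>

lemma integral_indep_var_iterated:
  fixes X Y :: "'s \<Rightarrow> 'x" and f :: "'x \<times> 'x \<Rightarrow> real"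
  assumes "prob_space P"
    and X: "X \<in> measurable P N" and Y: "Y \<in> measurable P K"
    and ind: "prob_space.indep_var P N X K Y"
    and f: "f \<in> borel_measurable (N \<Otimes>\<^sub>M K)"
    and int: "integrable P (\<lambda>s. f (X s, Y s))"
  shows "integrable P (\<lambda>s. \<integral>w. f (X s, w) \<partial>distr P K Y)"
    and "(\<integral>s. f (X s, Y s) \<partial>P) = (\<integral>s. (\<integral>w. f (X s, w) \<partial>distr P K Y) \<partial>P)"
proof -
  interpret P: prob_space P by fact
  let ?D = "distr P N X" and ?M = "distr P K Y"
  interpret D: prob_space ?D by (rule P.prob_space_distr[OF X])
  interpret M: prob_space ?M by (rule P.prob_space_distr[OF Y])
  interpret DM: pair_sigma_finite ?D ?M
    by (simp add: D.sigma_finite_measure_axioms M.sigma_finite_measure_axioms pair_sigma_finite_def)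
  have XY: "(\<lambda>s. (X s, Y s)) \<in> measurable P (N \<Otimes>\<^sub>M K)"
    using X Y by (rule measurable_Pair)
  have joint: "?D \<Otimes>\<^sub>M ?M = distr P (N \<Otimes>\<^sub>M K) (\<lambda>s. (X s, Y s))"
    using ind by (simp add: P.indep_var_distribution_eq)
  have f_int: "integrable (?D \<Otimes>\<^sub>M ?M) f"
    unfolding joint using integrable_distr_eq[OF XY f] int by simp
  have inner_meas: "(\<lambda>x. \<integral>w. f (x, w) \<partial>?M) \<in> borel_measurable N"
    using M.borel_measurable_lebesgue_integral[of "\<lambda>x w. f (x, w)" N] f
    by (simp add: sets_pair_measure_cong)
  show "integrable P (\<lambda>s. \<integral>w. f (X s, w) \<partial>?M)"
    using DM.integrable_fst'[OF f_int] integrable_distr_eq[OF X inner_meas] by simp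
  have "(\<integral>s. f (X s, Y s) \<partial>P) = integral\<^sup>L (distr P (N \<Otimes>\<^sub>M K) (\<lambda>s. (X s, Y s))) f"
    by (rule integral_distr[OF XY f, symmetric])
  also have "\<dots> = (\<integral>x. (\<integral>w. f (x, w) \<partial>?M) \<partial>?D)"
    using DM.integral_fst'[OF f_int] joint by simp
  also have "\<dots> = (\<integral>s. (\<integral>w. f (X s, w) \<partial>?M) \<partial>P)"
    by (rule integral_distr[OF X inner_meas])
  finally show "(\<integral>s. f (X s, Y s) \<partial>P) = (\<integral>s. (\<integral>w. f (X s, w) \<partial>?M) \<partial>P)" .
qed

lemma integral_indep_vars_next:
  fixes \<omega> :: "nat \<Rightarrow> 's \<Rightarrow> 'w" and h :: "'a \<times> 'w \<Rightarrow> real"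
  assumes "prob_space P"
    and indep: "prob_space.indep_vars P (\<lambda>_. M) \<omega> UNIV"
    and law: "distr P M (\<omega> k) = M"
    and F: "F \<in> measurable (PiM {..<k} (\<lambda>_. M)) N"
    and h: "h \<in> borel_measurable (N \<Otimes>\<^sub>M M)"
    and int: "integrable P (\<lambda>s. h (F (restrict (\<lambda>i. \<omega> i s) {..<k}), \<omega> k s))"
  shows "integrable P (\<lambda>s. \<integral>w. h (F (restrict (\<lambda>i. \<omega> i s) {..<k}), w) \<partial>M)"
    and "(\<integral>s. h (F (restrict (\<lambda>i. \<omega> i s) {..<k}), \<omega> k s) \<partial>P)
       = (\<integral>s. (\<integral>w. h (F (restrict (\<lambda>i. \<omega> i s) {..<k}), w) \<partial>M) \<partial>P)"
proof -
  interpret P: prob_space P by fact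
  let ?A = "PiM {..<k} (\<lambda>_. M)" and ?B = "PiM {k} (\<lambda>_. M)"
  let ?X = "\<lambda>s. restrict (\<lambda>i. \<omega> i s) {..<k}" and ?Y = "\<lambda>s. restrict (\<lambda>i. \<omega> i s) {k}"
  define f where "f = (\<lambda>(a, b). h (F a, b k))"
  have \<omega>: "\<And>i. \<omega> i \<in> measurable P M"
    using indep unfolding P.indep_vars_def by auto
  have X: "?X \<in> measurable P ?A" and Y: "?Y \<in> measurable P ?B"
    by (rule measurable_restrict, simp add: \<omega>)+
  have ind: "P.indep_var ?A ?X ?B ?Y"
    by (rule P.indep_var_restrict[OF indep]) auto
  have eval: "(\<lambda>b. b k) \<in> measurable ?B M"
    by (rule measurable_component_singleton) simp
  have f: "f \<in> borel_measurable (?A \<Otimes>\<^sub>M ?B)"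
    unfolding f_def using F h eval by measurable
  have inner: "(\<integral>b. f (a, b) \<partial>distr P ?B ?Y) = (\<integral>w. h (F a, w) \<partial>M)" if "a \<in> space ?A" for a
  proof -
    have "F a \<in> space N" using F that by (rule measurable_space)
    then have "(\<lambda>w. h (F a, w)) \<in> borel_measurable M"
      using h by measurable
    from integral_distr[OF _ this, of "\<lambda>b. b k" "distr P ?B ?Y"] eval
    have "(\<integral>w. h (F a, w) \<partial>distr (distr P ?B ?Y) M (\<lambda>b. b k)) = (\<integral>b. f (a, b) \<partial>distr P ?B ?Y)"
      by (simp add: f_def)
    moreover have "distr (distr P ?B ?Y) M (\<lambda>b. b k) = M"
      using law by (simp add: distr_distr[OF eval Y] comp_def)
    ultimately show ?thesis by simp
  qed
  have inner_X: "(\<integral>b. f (?X s, b) \<partial>distr P ?B ?Y) = (\<integral>w. h (F (?X s), w) \<partial>M)" if "s \<in> space P" for s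
    using inner[OF measurable_space[OF X that]] .
  have fXY: "f (?X s, ?Y s) = h (F (?X s), \<omega> k s)" for s by (simp add: f_def)
  note iterated = integral_indep_var_iterated[OF \<open>prob_space P\<close> X Y ind f, unfolded fXY, OF int]
  have "integrable P (\<lambda>s. \<integral>b. f (?X s, b) \<partial>distr P ?B ?Y) = integrable P (\<lambda>s. \<integral>w. h (F (?X s), w) \<partial>M)"
    by (rule Bochner_Integration.integrable_cong[OF refl inner_X])
  with iterated(1) show "integrable P (\<lambda>s. \<integral>w. h (F (?X s), w) \<partial>M)" by blast
  have "(\<integral>s. (\<integral>b. f (?X s, b) \<partial>distr P ?B ?Y) \<partial>P) = (\<integral>s. (\<integral>w. h (F (?X s), w) \<partial>M) \<partial>P)"
    by (rule Bochner_Integration.integral_cong[OF refl inner_X])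
  with iterated(2) show "(\<integral>s. h (F (?X s), \<omega> k s) \<partial>P) = (\<integral>s. (\<integral>w. h (F (?X s), w) \<partial>M) \<partial>P)"
    by (rule trans)
qed

lemma integral_norm_sq_le_mean_variance:
  fixes f :: "'w \<Rightarrow> 'a::{real_inner, banach, second_countable_topology}"
  assumes "prob_space M" and f: "integrable M f" and mean: "integral\<^sup>L M f = G"
    and var: "integrable M (\<lambda>w. (norm (f w - G))\<^sup>2)" and var_le: "(\<integral>w. (norm (f w - G))\<^sup>2 \<partial>M) \<le> s"
  shows "integrable M (\<lambda>w. (norm (f w))\<^sup>2)" and "(\<integral>w. (norm (f w))\<^sup>2 \<partial>M) \<le> (norm G)\<^sup>2 + s"
proof -
  interpret prob_space M by fact
  have expand: "(norm (f w))\<^sup>2 = (norm (f w - G))\<^sup>2 + 2 * ((f w - G) \<bullet> G) + (norm G)\<^sup>2" for w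
    using power2_norm_add[of "f w - G" G] by simp
  have cross: "integrable M (\<lambda>w. (f w - G) \<bullet> G)"
    using f by (intro integrable_inner_left) auto
  have "(\<integral>w. (f w - G) \<bullet> G \<partial>M) = (\<integral>w. (f w - G) \<partial>M) \<bullet> G"
    using f by (intro integral_inner_left) auto
  also have "(\<integral>w. (f w - G) \<partial>M) = 0"
    using f mean by (simp add: Bochner_Integration.integral_diff prob_space)
  finally have "(\<integral>w. (norm (f w))\<^sup>2 \<partial>M) = (\<integral>w. (norm (f w - G))\<^sup>2 \<partial>M) + (norm G)\<^sup>2"
    using var cross by (simp add: expand Bochner_Integration.integral_add prob_space)
  then show "(\<integral>w. (norm (f w))\<^sup>2 \<partial>M) \<le> (norm G)\<^sup>2 + s" using var_le by simp
  show "integrable M (\<lambda>w. (norm (f w))\<^sup>2)"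
    using var cross by (simp add: expand)
qed

section \<open>The stochastic linearized Bregman iteration for the l1 norm\<close>

lemma slbi_prefix_cong:
  "(\<And>j. j < k \<Longrightarrow> ws j = ws' j) \<Longrightarrow> slbi J d g \<tau> x0 v0 ws k = slbi J d g \<tau> x0 v0 ws' k"
  by (induction k) (simp_all add: Let_def)

lemma borel_measurable_soft_threshold: "soft_threshold d \<in> borel_measurable borel"
  unfolding soft_threshold_def[abs_def] clip_def
  by (intro borel_measurable_continuous_onI continuous_intros)

lemma measurable_slbi_l1norm:
  fixes g :: "real ^ 'n \<Rightarrow> 'w \<Rightarrow> real ^ 'n"
  assumes d: "d > 0" and g: "(\<lambda>(x, w). g x w) \<in> borel_measurable (borel \<Otimes>\<^sub>M M)"
    and "{..<k} \<subseteq> I"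
  shows "(\<lambda>ws. fst (slbi l1norm d g \<tau> x0 v0 ws k)) \<in> borel_measurable (PiM I (\<lambda>_. M))
    \<and> (\<lambda>ws. snd (slbi l1norm d g \<tau> x0 v0 ws k)) \<in> borel_measurable (PiM I (\<lambda>_. M))"
  using \<open>{..<k} \<subseteq> I\<close>
proof (induction k)
  case (Suc k)
  let ?\<theta> = "\<lambda>ws. fst (slbi l1norm d g \<tau> x0 v0 ws k)"
  let ?v = "\<lambda>ws. snd (slbi l1norm d g \<tau> x0 v0 ws k) - \<tau> k *\<^sub>R g (?\<theta> ws) (ws k)"
  have IH: "?\<theta> \<in> borel_measurable (PiM I (\<lambda>_. M))"
      "(\<lambda>ws. snd (slbi l1norm d g \<tau> x0 v0 ws k)) \<in> borel_measurable (PiM I (\<lambda>_. M))"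
    using Suc.IH Suc.prems by (auto simp: lessThan_Suc)
  have "(\<lambda>ws. (?\<theta> ws, ws k)) \<in> measurable (PiM I (\<lambda>_. M)) (borel \<Otimes>\<^sub>M M)"
    using Suc.prems by (intro measurable_Pair[OF IH(1)] measurable_component_singleton) auto
  from measurable_compose[OF this g]
  have "(\<lambda>ws. g (?\<theta> ws) (ws k)) \<in> borel_measurable (PiM I (\<lambda>_. M))" by simp
  then have v: "?v \<in> borel_measurable (PiM I (\<lambda>_. M))"
    using IH(2) by measurable
  have "(\<lambda>ws. soft_threshold d (d *\<^sub>R ?v ws)) \<in> borel_measurable (PiM I (\<lambda>_. M))"
    using measurable_compose[OF _ borel_measurable_soft_threshold, of "\<lambda>ws. d *\<^sub>R ?v ws"] v
    by measurable
  then show ?case using v by (simp add: Let_def prox_l1norm[OF d])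
qed simp

locale l1_slbi =
  fixes L :: "real ^ 'n \<Rightarrow> real" and gradL :: "real ^ 'n \<Rightarrow> real ^ 'n"
    and g :: "real ^ 'n \<Rightarrow> 'w \<Rightarrow> real ^ 'n"
    and M :: "'w measure" and P :: "'s measure" and \<omega> :: "nat \<Rightarrow> 's \<Rightarrow> 'w"
    and \<tau> :: "nat \<Rightarrow> real" and \<delta> Lc \<mu> \<sigma> :: real
    and \<theta>0 v0 \<theta>star :: "real ^ 'n"
    and \<theta> v :: "nat \<Rightarrow> 's \<Rightarrow> real ^ 'n"
  assumes \<theta>_def: "\<theta> k s = fst (slbi l1norm \<delta> g \<tau> \<theta>0 v0 (\<lambda>j. \<omega> j s) k)"
    and v_def: "v k s = snd (slbi l1norm \<delta> g \<tau> \<theta>0 v0 (\<lambda>j. \<omega> j s) k)"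
    and prob_M: "prob_space M" and prob_P: "prob_space P"
    and indep: "prob_space.indep_vars P (\<lambda>_. M) \<omega> UNIV"
    and law: "distr P M (\<omega> k) = M"
    and g_meas: "(\<lambda>(x, w). g x w) \<in> borel_measurable (borel \<Otimes>\<^sub>M M)"
    and g_integrable: "integrable M (g x)" and g_mean: "integral\<^sup>L M (g x) = gradL x"
    and L_grad: "(L has_derivative (\<lambda>h. gradL x \<bullet> h)) (at x)"
    and grad_lip: "norm (gradL x - gradL y) \<le> Lc * norm (x - y)"
    and var_integrable: "integrable M (\<lambda>w. (norm (g x w - gradL x))\<^sup>2)"
    and var_bound: "(\<integral>w. (norm (g x w - gradL x))\<^sup>2 \<partial>M) \<le> \<sigma>\<^sup>2"
    and Lc_pos: "Lc > 0" and \<mu>_pos: "\<mu> > 0" and \<delta>_pos: "\<delta> > 0"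
    and strong_conv: "L x + gradL x \<bullet> (y - x) + \<mu> / 2 * (norm (y - x))\<^sup>2 \<le> L y"
    and \<tau>_small: "\<tau> k \<le> \<mu> / (2 * \<delta> * Lc\<^sup>2)"
    and \<tau>_mono: "\<tau> (Suc k) \<le> \<tau> k"
    and \<tau>_sq_sum: "summable (\<lambda>k. (\<tau> k)\<^sup>2)"
    and \<tau>_sum: "filterlim (\<lambda>n. \<Sum>k<n. \<tau> k) at_top sequentially"
    and v0_subdiff: "v0 \<in> subdiff (Jdelta l1norm \<delta>) \<theta>0"
    and \<theta>star_min: "L \<theta>star \<le> L x"
    and int_bregman: "integrable P (\<lambda>s. bregman (Jdelta l1norm \<delta>) (v k s) \<theta>star (\<theta> k s))"
    and int_g: "integrable P (\<lambda>s. (norm (g (\<theta> k s) (\<omega> k s)))\<^sup>2)"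
    and int_dist: "integrable P (\<lambda>s. (norm (\<theta>star - \<theta> k s))\<^sup>2)"
begin

sublocale P: prob_space P by (fact prob_P)

abbreviation D :: "nat \<Rightarrow> 's \<Rightarrow> real" where
  "D k s \<equiv> bregman (Jdelta l1norm \<delta>) (v k s) \<theta>star (\<theta> k s)"

abbreviation err :: "nat \<Rightarrow> 's \<Rightarrow> real" where
  "err k s \<equiv> (norm (\<theta>star - \<theta> k s))\<^sup>2"

abbreviation G :: "nat \<Rightarrow> 's \<Rightarrow> real ^ 'n" where
  "G k s \<equiv> g (\<theta> k s) (\<omega> k s)"

lemma \<tau>_nonneg: "0 \<le> \<tau> k"
  using antimono_nonneg_if_filterlim_at_top[OF \<tau>_mono \<tau>_sum] .

lemma gradL_\<theta>star: "gradL \<theta>star = 0"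
proof -
  have "(\<lambda>h. gradL \<theta>star \<bullet> h) = (\<lambda>h. 0)"
    by (rule differential_zero_maxmin[where x=\<theta>star and S=UNIV and f=L])
      (use L_grad \<theta>star_min in auto)
  then have "gradL \<theta>star \<bullet> gradL \<theta>star = 0" by metis
  then show ?thesis by simp
qed

lemma gradL_inner_le: "gradL x \<bullet> (\<theta>star - x) \<le> - \<mu> * (norm (\<theta>star - x))\<^sup>2"
  using strong_conv[of x \<theta>star] strong_conv[of \<theta>star x] gradL_\<theta>star
  by (simp add: norm_minus_commute)

lemma second_moment_le: "(\<integral>w. (norm (g x w))\<^sup>2 \<partial>M) \<le> Lc\<^sup>2 * (norm (\<theta>star - x))\<^sup>2 + \<sigma>\<^sup>2"
proof -
  have "norm (gradL x) \<le> Lc * norm (\<theta>star - x)"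
    using grad_lip[of x \<theta>star] gradL_\<theta>star by (simp add: norm_minus_commute)
  then have "(norm (gradL x))\<^sup>2 \<le> Lc\<^sup>2 * (norm (\<theta>star - x))\<^sup>2"
    by (metis norm_ge_zero power_mono power_mult_distrib)
  then show ?thesis
    using integral_norm_sq_le_mean_variance(2)[OF prob_M g_integrable[of x] g_mean[of x]
        var_integrable[of x] var_bound[of x]]
    by linarith
qed

lemma v_Suc: "v (Suc k) s = v k s - \<tau> k *\<^sub>R G k s"
  by (simp add: \<theta>_def v_def Let_def)

lemma \<theta>_Suc: "\<theta> (Suc k) s = soft_threshold \<delta> (\<delta> *\<^sub>R v (Suc k) s)"
  by (simp add: \<theta>_def v_def Let_def prox_l1norm[OF \<delta>_pos])

lemma l1_subgrad_iterate: "l1_subgrad (v k s - inverse \<delta> *\<^sub>R \<theta> k s) (\<theta> k s)"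
proof (cases k)
  case 0
  then show ?thesis using subdiff_Jdelta_l1_subgrad[OF \<delta>_pos v0_subdiff] by (simp add: \<theta>_def v_def)
next
  case (Suc j)
  then show ?thesis using l1_subgrad_soft_threshold[OF \<delta>_pos] by (simp add: \<theta>_Suc)
qed

lemma bregman_bounds:
  "err k s / (2 * \<delta>) \<le> D k s"
  "D k s \<le> (l1_bregman_const \<theta>star + 1 / (2 * \<delta>)) * err k s"
  using bregman_Jdelta_l1norm_bounds[OF \<delta>_pos l1_subgrad_iterate] by simp_all

lemma bregman_Suc_le:
  "D (Suc k) s \<le> D k s + \<tau> k * (G k s \<bullet> (\<theta>star - \<theta> k s)) + \<delta> / 2 * (\<tau> k)\<^sup>2 * (norm (G k s))\<^sup>2"
  unfolding v_Suc
proof (rule bregman_step_le[OF \<delta>_pos])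
  show "(norm (\<theta> (Suc k) s - \<theta> k s))\<^sup>2 / (2 * \<delta>) \<le> bregman (Jdelta l1norm \<delta>) (v k s) (\<theta> (Suc k) s) (\<theta> k s)"
    using bregman_Jdelta_l1norm_bounds(1)[OF \<delta>_pos l1_subgrad_iterate] .
qed

lemma \<omega>_measurable: "\<omega> i \<in> measurable P M"
  using indep unfolding P.indep_vars_def by auto

lemma \<theta>_history:
  obtains F where "F \<in> borel_measurable (PiM {..<k} (\<lambda>_. M))"
    and "\<And>s. \<theta> k s = F (restrict (\<lambda>i. \<omega> i s) {..<k})"
proof
  show "(\<lambda>ws. fst (slbi l1norm \<delta> g \<tau> \<theta>0 v0 ws k)) \<in> borel_measurable (PiM {..<k} (\<lambda>_. M))"
    using measurable_slbi_l1norm[OF \<delta>_pos g_meas] by blast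
  show "\<theta> k s = fst (slbi l1norm \<delta> g \<tau> \<theta>0 v0 (restrict (\<lambda>i. \<omega> i s) {..<k}) k)" for s
    unfolding \<theta>_def by (rule arg_cong[where f=fst], rule slbi_prefix_cong) simp
qed

lemma \<theta>_measurable: "\<theta> k \<in> borel_measurable P"
proof -
  obtain F where F: "F \<in> borel_measurable (PiM {..<k} (\<lambda>_. M))"
    and \<theta>F: "\<And>s. \<theta> k s = F (restrict (\<lambda>i. \<omega> i s) {..<k})"
    using \<theta>_history[of k] by blast
  have "(\<lambda>s. restrict (\<lambda>i. \<omega> i s) {..<k}) \<in> measurable P (PiM {..<k} (\<lambda>_. M))"
    by (rule measurable_restrict) (simp add: \<omega>_measurable)
  from measurable_compose[OF this F] show ?thesis by (simp add: \<theta>F[abs_def])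
qed

lemma G_measurable: "G k \<in> borel_measurable P"
proof -
  have "(\<lambda>s. (\<theta> k s, \<omega> k s)) \<in> measurable P (borel \<Otimes>\<^sub>M M)"
    by (rule measurable_Pair[OF \<theta>_measurable \<omega>_measurable])
  from measurable_compose[OF this g_meas] show ?thesis by simp
qed

(* theta k depends only on the samples before k, hence is independent of the fresh sample omega k. *)
lemma integral_next_sample:
  fixes h :: "(real ^ 'n) \<times> 'w \<Rightarrow> real"
  assumes h: "h \<in> borel_measurable (borel \<Otimes>\<^sub>M M)"
    and int: "integrable P (\<lambda>s. h (\<theta> k s, \<omega> k s))"
  shows "integrable P (\<lambda>s. \<integral>w. h (\<theta> k s, w) \<partial>M)"
    and "(\<integral>s. h (\<theta> k s, \<omega> k s) \<partial>P) = (\<integral>s. (\<integral>w. h (\<theta> k s, w) \<partial>M) \<partial>P)"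
proof -
  obtain F where F: "F \<in> borel_measurable (PiM {..<k} (\<lambda>_. M))"
    and \<theta>F: "\<And>s. \<theta> k s = F (restrict (\<lambda>i. \<omega> i s) {..<k})"
    using \<theta>_history[of k] by blast
  from integral_indep_vars_next[OF prob_P indep law[of k] F h] int
  show "integrable P (\<lambda>s. \<integral>w. h (\<theta> k s, w) \<partial>M)"
    and "(\<integral>s. h (\<theta> k s, \<omega> k s) \<partial>P) = (\<integral>s. (\<integral>w. h (\<theta> k s, w) \<partial>M) \<partial>P)"
    by (simp_all add: \<theta>F)
qed

lemma integrable_descent_term: "integrable P (\<lambda>s. G k s \<bullet> (\<theta>star - \<theta> k s))"
proof (rule Bochner_Integration.integrable_bound)
  show "integrable P (\<lambda>s. (norm (G k s))\<^sup>2 + err k s)"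
    using int_g int_dist by auto
  show "(\<lambda>s. G k s \<bullet> (\<theta>star - \<theta> k s)) \<in> borel_measurable P"
    using G_measurable \<theta>_measurable by measurable
  show "AE s in P. norm (G k s \<bullet> (\<theta>star - \<theta> k s)) \<le> norm ((norm (G k s))\<^sup>2 + err k s)"
  proof (rule AE_I2)
    fix s
    have "\<bar>G k s \<bullet> (\<theta>star - \<theta> k s)\<bar> \<le> norm (G k s) * norm (\<theta>star - \<theta> k s)"
      by (rule Cauchy_Schwarz_ineq2)
    also have "\<dots> \<le> (norm (G k s))\<^sup>2 + err k s"
      using sum_squares_bound[of "norm (G k s)" "norm (\<theta>star - \<theta> k s)"]
        mult_nonneg_nonneg[OF norm_ge_zero norm_ge_zero, of "G k s" "\<theta>star - \<theta> k s"] by linarith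
    finally show "norm (G k s \<bullet> (\<theta>star - \<theta> k s)) \<le> norm ((norm (G k s))\<^sup>2 + err k s)" by simp
  qed
qed

lemma expected_descent_term_le:
  "(\<integral>s. G k s \<bullet> (\<theta>star - \<theta> k s) \<partial>P) \<le> - \<mu> * (\<integral>s. err k s \<partial>P)"
proof -
  let ?h = "\<lambda>(x, w). g x w \<bullet> (\<theta>star - x)"
  have h: "?h \<in> borel_measurable (borel \<Otimes>\<^sub>M M)"
    using g_meas by measurable
  have mean: "(\<integral>w. ?h (x, w) \<partial>M) = gradL x \<bullet> (\<theta>star - x)" for x
    using g_integrable g_mean by (simp add: integral_inner_left)
  note next_sample = integral_next_sample[OF h, of k, simplified mean, simplified]
  have "(\<integral>s. G k s \<bullet> (\<theta>star - \<theta> k s) \<partial>P) = (\<integral>s. gradL (\<theta> k s) \<bullet> (\<theta>star - \<theta> k s) \<partial>P)"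
    using next_sample(2) integrable_descent_term by simp
  also have "\<dots> \<le> (\<integral>s. - \<mu> * err k s \<partial>P)"
    using next_sample(1) integrable_descent_term int_dist gradL_inner_le by (intro integral_mono) auto
  finally show ?thesis by simp
qed

lemma expected_second_moment_le:
  "(\<integral>s. (norm (G k s))\<^sup>2 \<partial>P) \<le> Lc\<^sup>2 * (\<integral>s. err k s \<partial>P) + \<sigma>\<^sup>2"
proof -
  let ?h = "\<lambda>(x, w). (norm (g x w))\<^sup>2"
  have h: "?h \<in> borel_measurable (borel \<Otimes>\<^sub>M M)"
    using g_meas by measurable
  note next_sample = integral_next_sample[OF h, of k, simplified]
  have "(\<integral>s. (norm (G k s))\<^sup>2 \<partial>P) = (\<integral>s. (\<integral>w. (norm (g (\<theta> k s) w))\<^sup>2 \<partial>M) \<partial>P)"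
    using next_sample(2) int_g by simp
  also have "\<dots> \<le> (\<integral>s. Lc\<^sup>2 * err k s + \<sigma>\<^sup>2 \<partial>P)"
    using next_sample(1) int_g int_dist second_moment_le by (intro integral_mono) auto
  also have "\<dots> = Lc\<^sup>2 * (\<integral>s. err k s \<partial>P) + \<sigma>\<^sup>2"
    using int_dist by (simp add: P.prob_space)
  finally show ?thesis .
qed

lemma expected_bregman_Suc_le:
  "(\<integral>s. D (Suc k) s \<partial>P)
     \<le> (\<integral>s. D k s \<partial>P) - \<mu> / 2 * \<tau> k * (\<integral>s. err k s \<partial>P) + \<delta> * \<sigma>\<^sup>2 / 2 * (\<tau> k)\<^sup>2"
proof -
  let ?e = "\<integral>s. err k s \<partial>P"
  have e_nonneg: "0 \<le> ?e" by simp
  have "(\<integral>s. D (Suc k) s \<partial>P)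
      \<le> (\<integral>s. D k s + \<tau> k * (G k s \<bullet> (\<theta>star - \<theta> k s)) + \<delta> / 2 * (\<tau> k)\<^sup>2 * (norm (G k s))\<^sup>2 \<partial>P)"
    using int_bregman integrable_descent_term int_g bregman_Suc_le by (intro integral_mono) auto
  also have "\<dots> = (\<integral>s. D k s \<partial>P) + \<tau> k * (\<integral>s. G k s \<bullet> (\<theta>star - \<theta> k s) \<partial>P)
      + \<delta> / 2 * (\<tau> k)\<^sup>2 * (\<integral>s. (norm (G k s))\<^sup>2 \<partial>P)"
    using int_bregman integrable_descent_term int_g by simp
  also have "\<dots> \<le> (\<integral>s. D k s \<partial>P) + \<tau> k * (- \<mu> * ?e) + \<delta> / 2 * (\<tau> k)\<^sup>2 * (Lc\<^sup>2 * ?e + \<sigma>\<^sup>2)"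
    using expected_descent_term_le expected_second_moment_le \<tau>_nonneg \<delta>_pos
    by (intro add_mono mult_left_mono) auto
  also have "\<dots> \<le> (\<integral>s. D k s \<partial>P) - \<mu> / 2 * \<tau> k * ?e + \<delta> * \<sigma>\<^sup>2 / 2 * (\<tau> k)\<^sup>2"
  proof -
    have "\<delta> * \<tau> k * Lc\<^sup>2 \<le> \<mu>"
      using \<tau>_small[of k] \<delta>_pos Lc_pos \<mu>_pos by (simp add: field_simps)
    then have "t * (- \<mu> * e) + \<delta> / 2 * t\<^sup>2 * (Lc\<^sup>2 * e + \<sigma>\<^sup>2) \<le> - \<mu> / 2 * t * e + \<delta> * \<sigma>\<^sup>2 / 2 * t\<^sup>2"
      if "t = \<tau> k" "0 \<le> e" for t e
    proof -
      have "(t * e) * (\<delta> * t * Lc\<^sup>2) \<le> (t * e) * \<mu>"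
        using that \<open>\<delta> * \<tau> k * Lc\<^sup>2 \<le> \<mu>\<close> \<tau>_nonneg[of k] by (intro mult_left_mono) auto
      then show ?thesis by (simp add: power2_eq_square algebra_simps)
    qed
    from this[OF refl e_nonneg] show ?thesis by linarith
  qed
  finally show ?thesis .
qed

lemma expected_bregman_bounds:
  "(\<integral>s. err k s \<partial>P) \<le> 2 * \<delta> * (\<integral>s. D k s \<partial>P)"
  "(\<integral>s. D k s \<partial>P) \<le> (l1_bregman_const \<theta>star + 1 / (2 * \<delta>)) * (\<integral>s. err k s \<partial>P)"
proof -
  have "(\<integral>s. err k s \<partial>P) / (2 * \<delta>) = (\<integral>s. err k s / (2 * \<delta>) \<partial>P)" by simp
  also have "\<dots> \<le> (\<integral>s. D k s \<partial>P)"
    using int_dist int_bregman bregman_bounds(1) by (intro integral_mono) auto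
  finally have "(\<integral>s. err k s \<partial>P) / (2 * \<delta>) \<le> (\<integral>s. D k s \<partial>P)" .
  then show "(\<integral>s. err k s \<partial>P) \<le> 2 * \<delta> * (\<integral>s. D k s \<partial>P)"
    using \<delta>_pos by (simp add: field_simps)
  show "(\<integral>s. D k s \<partial>P) \<le> (l1_bregman_const \<theta>star + 1 / (2 * \<delta>)) * (\<integral>s. err k s \<partial>P)"
  proof -
    have "(\<integral>s. D k s \<partial>P) \<le> (\<integral>s. (l1_bregman_const \<theta>star + 1 / (2 * \<delta>)) * err k s \<partial>P)"
      using int_dist int_bregman bregman_bounds(2) by (intro integral_mono) auto
    then show ?thesis by simp
  qed
qed

theorem expected_bregman_tendsto_zero: "(\<lambda>k. \<integral>s. D k s \<partial>P) \<longlonglongrightarrow> 0"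
proof (rule descent_tendsto_zero[where \<tau> = \<tau> and e = "\<lambda>k. \<integral>s. err k s \<partial>P"
      and C = "l1_bregman_const \<theta>star + 1 / (2 * \<delta>)"])
  show "0 \<le> (\<integral>s. D k s \<partial>P)" for k
  proof -
    have "0 \<le> (\<integral>s. err k s \<partial>P)" by simp
    then have "0 \<le> 2 * \<delta> * (\<integral>s. D k s \<partial>P)"
      using expected_bregman_bounds(1)[of k] by linarith
    then show ?thesis using \<delta>_pos by (simp add: zero_le_mult_iff)
  qed
  show "0 \<le> (\<integral>s. err k s \<partial>P)" for k by simp
  show "0 < \<mu> / 2" using \<mu>_pos by simp
  show "0 \<le> \<delta> * \<sigma>\<^sup>2 / 2" using \<delta>_pos by simp
qed (fact \<tau>_nonneg expected_bregman_Suc_le expected_bregman_bounds(2) \<tau>_sq_sum \<tau>_sum)+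

theorem expected_error_tendsto_zero: "(\<lambda>k. \<integral>s. err k s \<partial>P) \<longlonglongrightarrow> 0"
proof (rule tendsto_sandwich[OF _ _ tendsto_const])
  show "(\<lambda>k. 2 * \<delta> * (\<integral>s. D k s \<partial>P)) \<longlonglongrightarrow> 0"
    using tendsto_mult_right_zero[OF expected_bregman_tendsto_zero] by simp
  show "eventually (\<lambda>k. (\<integral>s. err k s \<partial>P) \<le> 2 * \<delta> * (\<integral>s. D k s \<partial>P)) sequentially"
    using expected_bregman_bounds(1) by simp
qed simp

end

theorem corollary3p4:
  fixes L :: "real ^ 'n \<Rightarrow> real" and gradL :: "real ^ 'n \<Rightarrow> real ^ 'n"
    and g :: "real ^ 'n \<Rightarrow> 'w \<Rightarrow> real ^ 'n"
    and M :: "'w measure" and P :: "'s measure" and \<omega> :: "nat \<Rightarrow> 's \<Rightarrow> 'w"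
    and \<tau> :: "nat \<Rightarrow> real" and \<delta> Lc \<mu> \<sigma> :: real
    and \<theta>0 v0 \<theta>star :: "real ^ 'n"
    and \<theta> v :: "nat \<Rightarrow> 's \<Rightarrow> real ^ 'n"
  defines "\<theta> \<equiv> (\<lambda>k s. fst (slbi l1norm \<delta> g \<tau> \<theta>0 v0 (\<lambda>j. \<omega> j s) k))"
      and "v \<equiv> (\<lambda>k s. snd (slbi l1norm \<delta> g \<tau> \<theta>0 v0 (\<lambda>j. \<omega> j s) k))"
  assumes probM: "prob_space M" and probP: "prob_space P"
    and indep: "prob_space.indep_vars P (\<lambda>_. M) \<omega> UNIV"
    and law: "\<forall>k. distr P M (\<omega> k) = M"
    and g_meas: "(\<lambda>(x, w). g x w) \<in> borel_measurable (borel \<Otimes>\<^sub>M M)"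
    and g_unbiased: "\<forall>x. integrable M (g x) \<and> integral\<^sup>L M (g x) = gradL x"
    (* (A) *)
    and L_nonneg: "\<forall>x. L x \<ge> 0"
    and L_grad: "\<forall>x. (L has_derivative (\<lambda>h. gradL x \<bullet> h)) (at x)"
    and Lc_pos: "Lc > 0"
    and grad_lip: "\<forall>x y. norm (gradL x - gradL y) \<le> Lc * norm (x - y)"
    (* (B) *)
    and \<sigma>_pos: "\<sigma> > 0"
    and var_bound: "\<forall>x. integrable M (\<lambda>w. (norm (g x w - gradL x))\<^sup>2)
                        \<and> (\<integral>w. (norm (g x w - gradL x))\<^sup>2 \<partial>M) \<le> \<sigma>\<^sup>2"
    (* (C) *)
    and \<mu>_pos: "\<mu> > 0"
    and strong_conv: "\<forall>x y. L y \<ge> L x + gradL x \<bullet> (y - x) + \<mu> / 2 * (norm (y - x))\<^sup>2"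
    (* parameters and step sizes *)
    and \<delta>_pos: "\<delta> > 0"
    and \<tau>_small: "\<forall>k. \<tau> k \<le> \<mu> / (2 * \<delta> * Lc\<^sup>2)"
    and \<tau>_mono: "\<forall>k. \<tau> (Suc k) \<le> \<tau> k"
    and \<tau>_sq_sum: "summable (\<lambda>k. (\<tau> k)\<^sup>2)"
    and \<tau>_sum: "filterlim (\<lambda>n. \<Sum>k<n. \<tau> k) at_top sequentially"
    (* initialisation *)
    and v0_sub: "v0 \<in> subdiff (Jdelta l1norm \<delta>) \<theta>0"
    (* minimiser *)
    and \<theta>star_min: "\<forall>x. L \<theta>star \<le> L x"
    (* all expectations appearing are finite *)
    and int_D: "\<forall>k. integrable P (\<lambda>s. bregman (Jdelta l1norm \<delta>) (v k s) \<theta>star (\<theta> k s))"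
    and int_L: "\<forall>k. integrable P (\<lambda>s. L (\<theta> k s))"
    and int_g: "\<forall>k. integrable P (\<lambda>s. (norm (g (\<theta> k s) (\<omega> k s)))\<^sup>2)"
    and int_dist: "\<forall>k. integrable P (\<lambda>s. (norm (\<theta>star - \<theta> k s))\<^sup>2)"
  shows "((\<lambda>k. \<integral>s. bregman (Jdelta l1norm \<delta>) (v k s) \<theta>star (\<theta> k s) \<partial>P) \<longlonglongrightarrow> 0)
       \<and> (\<lambda>k. \<integral>s. (norm (\<theta>star - \<theta> k s))\<^sup>2 \<partial>P) \<longlonglongrightarrow> 0"
proof -
  interpret l1_slbi L gradL g M P \<omega> \<tau> \<delta> Lc \<mu> \<sigma> \<theta>0 v0 \<theta>star \<theta> v
    by (rule l1_slbi.intro) (use assms in \<open>simp_all add: \<theta>_def v_def\<close>)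
  show ?thesis
    using expected_bregman_tendsto_zero expected_error_tendsto_zero by simp
qed

end
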